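(* Let $|q|<1$ and let $(\alpha_n(a,k,q),\beta_n(a,k,q))_{n\ge0}$ be sequences depending on parameters $a,k$ and base $q$ such that $(\alpha_n(a,k,q),\beta_n(a,k,q))$, $(\alpha_n(-a,-k,q),\beta_n(-a,-k,q))$ and $(\alpha_n(a^2,k^2,q^2),\beta_n(a^2,k^2,q^2))$ are WP-Bailey pairs (the last with base $q^2$). Assume $|qa|<|z|$, that no denominator vanishes, and that all series below converge absolutely. Then \begin{multline*} \sum_{n=1}^{\infty} \frac{(1-k q^{2n})(z;q)_{n}(q;q)_{n-1}}{(1-k)( q k,q k/z;q)_{n}}\left( \frac{q a}{ z }\right )^{n} \beta_n(a,k,q) + \sum_{n=1}^{\infty} \frac{(1+k q^{2n})(z;q)_{n}(q;q)_{n-1}}{(1+k)( -q k,-q k/z;q)_{n}}\left( \frac{-q a}{ z }\right )^{n}\beta_n(-a,-k,q)\\ -2 \sum_{n=1}^{\infty} \frac{(1-k^2q^{4n})(z^2;q^2)_{n}(q^2;q^2)_{n-1}} {(1-k^2)( q^2 k^2,q^2k^2/z^2;q^2)_{n}}\left( \frac{q^2 a^2}{ z^2 }\right )^{n}\beta_n(a^2,k^2,q^2)\\ =\sum_{n=1}^{\infty}\frac{(z;q)_{n}(q;q)_{n-1}}{(q a ,q a/z;q)_n}\left (\frac{q a}{z}\right)^{n}\alpha_n(a,k,q) +\sum_{n=1}^{\infty}\frac{(z;q)_{n}(q;q)_{n-1}}{(-q a ,-q a/z;q)_n}\left (\frac{-q a}{z}\right)^{n}\alpha_n(-a,-k,q)\\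 -2\sum_{n=1}^{\infty}\frac{(z^2;q^2)_{n}(q^2;q^2)_{n-1}}{(q^2 a^2 ,q^2a^2/z^2;q^2)_n}\left (\frac{q^2a^2}{z^2}\right)^{n}\alpha_n(a^2,k^2,q^2). \end{multline*}
   Context: Notation: $(x;q)_n=(1-x)(1-xq)\cdots(1-xq^{n-1})$, $(x;q)_0=1$, $(x;q)_\infty=\prod_{j\ge0}(1-xq^j)$, and $(x_1,\dots,x_m;q)_n=(x_1;q)_n\cdots(x_m;q)_n$. A WP-Bailey pair (with parameters $a,k$ and base $q$) is a pair of sequences $(\alpha_n(a,k,q),\beta_n(a,k,q))_{n\ge0}$ with $\alpha_0=\beta_0=1$ and, for $n>0$, $$\beta_n(a,k,q)=\sum_{j=0}^{n}\frac{(k/a;q)_{n-j}(k;q)_{n+j}}{(q;q)_{n-j}(aq;q)_{n+j}}\alpha_j(a,k,q).$$ *)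

theory Defs
  imports Complex_Main
begin

definition qpoch :: "complex \<Rightarrow> complex \<Rightarrow> nat \<Rightarrow> complex" where
  "qpoch x q n = (\<Prod>j<n. (1 - x * q ^ j))"

definition WP_Bailey_pair ::
  "(nat \<Rightarrow> complex) \<Rightarrow> (nat \<Rightarrow> complex) \<Rightarrow> complex \<Rightarrow> complex \<Rightarrow> complex \<Rightarrow> bool" where
  "WP_Bailey_pair \<alpha> \<beta> a k q \<longleftrightarrow>
     \<alpha> 0 = 1 \<and> \<beta> 0 = 1 \<and>
     (\<forall>n>0. \<beta> n = (\<Sum>j=0..n.
        (qpoch (k/a) q (n-j) * qpoch k q (n+j)) / (qpoch q q (n-j) * qpoch (a*q) q (n+j)) * \<alpha> j))"

definition bcoef :: "complex \<Rightarrow> complex \<Rightarrow> complex \<Rightarrow> complex \<Rightarrow> nat \<Rightarrow> complex" where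
  "bcoef a k q z n =
     (1 - k * q ^ (2*n)) * qpoch z q n * qpoch q q (n-1)
       / ((1 - k) * qpoch (q*k) q n * qpoch (q*k/z) q n) * (q*a/z) ^ n"

definition acoef :: "complex \<Rightarrow> complex \<Rightarrow> complex \<Rightarrow> complex \<Rightarrow> nat \<Rightarrow> complex" where
  "acoef a k q z n =
     qpoch z q n * qpoch q q (n-1) / (qpoch (q*a) q n * qpoch (q*a/z) q n) * (q*a/z) ^ n"

end

theory Submission
  imports Defs "HOL-Analysis.Uniform_Limit"
begin

text \<open>
  Insert \<open>\<beta>_n = \<Sum>_j M(n,j) \<alpha>_j\<close> into a \<open>\<beta>\<close>-series and interchange the sums. For \<open>j \<ge> 1\<close> the
  coefficient of \<open>\<alpha>_j\<close> is its coefficient in the \<open>\<alpha>\<close>-series times a very-well-poised series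
  \<open>\<Sum>_m T_j(a,k;m)\<close>, and this series sums to 1: \<open>T_j(aq,kq;m) - T_j(a,k;m)\<close> telescopes in \<open>m\<close>, so
  the sum is invariant under \<open>(a,k) \<mapsto> (aq,kq)\<close>, and after \<open>N\<close> shifts only the term \<open>m = 0\<close>
  survives as \<open>N \<rightarrow> \<infinity>\<close> (Tannery's theorem). So each \<open>\<beta>\<close>-series is its \<open>\<alpha>\<close>-series plus the
  column \<open>j = 0\<close>, a remainder \<open>R(a,k)\<close> without closed form. The same telescoping gives
  \<open>R(aq,kq) = R(a,k) - B(a,k)\<close> with \<open>B\<close> a signed sum of four terms \<open>c/(1-c)\<close>; since
  \<open>c/(1-c) - c/(1+c) = 2c\<^sup>2/(1-c\<^sup>2)\<close>, the combination \<open>B(a,k) + B(-a,-k) - 2B(a\<^sup>2,k\<^sup>2;q\<^sup>2)\<close>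
  vanishes. Hence \<open>R(a,k) + R(-a,-k) - 2R(a\<^sup>2,k\<^sup>2;q\<^sup>2)\<close> is shift invariant and tends to 0,
  so it is 0.
\<close>

lemma qpoch_0 [simp]: "qpoch x q 0 = 1"
  by (simp add: qpoch_def)

lemma qpoch_Suc: "qpoch x q (Suc n) = qpoch x q n * (1 - x*q^n)"
  by (simp add: qpoch_def)

lemma qpoch_add: "qpoch x q (m + n) = qpoch x q m * qpoch (x*q^m) q n"
  by (induction n) (simp_all add: qpoch_Suc power_add mult_ac)

lemma qpoch_Suc_shift: "qpoch x q (Suc n) = (1 - x) * qpoch (x*q) q n"
  using qpoch_add[of x q 1 n] by (simp add: qpoch_def)

lemma qpoch_mult_base:
  "1 - x \<noteq> 0 \<Longrightarrow> qpoch (x*q) q n = qpoch x q n * (1 - x*q^n) / (1 - x)"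
  using qpoch_Suc[of x q n] qpoch_Suc_shift[of x q n] by (simp add: field_simps)

lemma qpoch_q_nonzero:
  assumes "norm q < 1"
  shows "qpoch q q n \<noteq> 0"
proof -
  have "1 - q * q^i \<noteq> 0" for i
  proof
    assume "1 - q * q^i = 0"
    then have "norm (q^Suc i) = 1" by (simp add: algebra_simps)
    moreover have "norm (q^Suc i) < 1"
      unfolding norm_power using assms by (intro power_less_one_iff[THEN iffD2]) auto
    ultimately show False by simp
  qed
  then show ?thesis unfolding qpoch_def by (simp add: prod_zero_iff)
qed

lemma qpoch_tendsto_1:
  assumes "(f \<longlongrightarrow> 0) F"
  shows "((\<lambda>x. qpoch (f x) q n) \<longlongrightarrow> 1) F"
proof -
  have "((\<lambda>x. \<Prod>i<n. 1 - f x * q^i) \<longlongrightarrow> (\<Prod>i<n. 1 - 0 * q^i)) F"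
    by (intro tendsto_intros assms)
  then show ?thesis by (simp add: qpoch_def)
qed

lemma norm_mult_mono:
  fixes x y :: "'a::real_normed_div_algebra"
  shows "norm x \<le> b \<Longrightarrow> norm y \<le> c \<Longrightarrow> norm (x * y) \<le> b * c"
  by (simp add: norm_mult mult_mono')

lemma norm_inverse_le_of_ge:
  fixes d :: "'a::real_normed_div_algebra"
  shows "0 < \<delta> \<Longrightarrow> \<delta> \<le> norm d \<Longrightarrow> norm (inverse d) \<le> 1 / \<delta>"
  by (simp add: norm_inverse le_imp_inverse_le divide_inverse)

lemma norm_prod_one_minus_ge:
  fixes w :: "'i \<Rightarrow> 'a::real_normed_field"
  assumes "finite A"
  shows "1 - (\<Sum>i\<in>A. norm (w i)) \<le> norm (\<Prod>i\<in>A. 1 - w i)"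
  using assms
proof (induction A rule: finite_induct)
  case empty
  show ?case by simp
next
  case (insert i A)
  define s where "s = (\<Sum>i\<in>A. norm (w i))"
  define p where "p = norm (\<Prod>i\<in>A. 1 - w i)"
  have s: "0 \<le> s" unfolding s_def by (simp add: sum_nonneg)
  have wi: "1 - norm (w i) \<le> norm (1 - w i)"
    using norm_triangle_ineq3[of 1 "w i"] by simp
  have "1 - (norm (w i) + s) \<le> p * norm (1 - w i)"
  proof (cases "norm (w i) \<le> 1")
    case True
    have "1 - (norm (w i) + s) \<le> (1 - s) * (1 - norm (w i))" using s by (simp add: algebra_simps)
    also have "\<dots> \<le> p * norm (1 - w i)"
      using insert.IH True wi by (intro mult_mono) (auto simp: s_def p_def)
    finally show ?thesis .
  next
    case False
    then have "1 - (norm (w i) + s) \<le> 0" using s by linarith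
    also have "0 \<le> p * norm (1 - w i)" by (simp add: p_def)
    finally show ?thesis .
  qed
  then show ?case using insert.hyps by (simp add: s_def p_def norm_mult mult.commute)
qed

lemma geometric_partial_sum_le:
  fixes r :: real
  assumes "0 \<le> r" "r < 1"
  shows "(\<Sum>i<n. r^i) \<le> 1 / (1 - r)"
proof -
  have "(\<Sum>i<n. r^i) = (1 - r^n) / (1 - r)" using assms by (simp add: sum_gp_strict)
  also have "\<dots> \<le> 1 / (1 - r)" using assms by (intro divide_right_mono) auto
  finally show ?thesis .
qed

lemma qpoch_norm_le:
  assumes q: "norm q < 1" and c: "norm c \<le> B"
  shows "norm (qpoch c q n) \<le> exp (B / (1 - norm q))"
proof -
  have B: "0 \<le> B" using c norm_ge_zero order_trans by blast
  have "norm (qpoch c q n) \<le> (\<Prod>i<n. norm (1 - c*q^i))"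
    unfolding qpoch_def by (rule norm_prod_le)
  also have "\<dots> \<le> (\<Prod>i<n. exp (B * norm q ^ i))"
  proof (rule prod_mono)
    fix i
    have "norm (1 - c*q^i) \<le> 1 + norm c * norm q ^ i"
      using norm_triangle_ineq4[of 1 "c*q^i"] by (simp add: norm_mult norm_power)
    also have "\<dots> \<le> 1 + B * norm q ^ i" using c by (intro add_left_mono mult_right_mono) auto
    also have "\<dots> \<le> exp (B * norm q ^ i)" by simp
    finally show "0 \<le> norm (1 - c*q^i) \<and> norm (1 - c*q^i) \<le> exp (B * norm q ^ i)" by simp
  qed
  also have "\<dots> = exp (B * (\<Sum>i<n. norm q ^ i))" by (simp add: exp_sum sum_distrib_left)
  also have "\<dots> \<le> exp (B * (1 / (1 - norm q)))"
    using mult_left_mono[OF geometric_partial_sum_le[of "norm q" n] B] q by simp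
  finally show ?thesis by simp
qed

lemma qpoch_norm_ge:
  assumes q: "norm q < 1"
  shows "1 - norm c / (1 - norm q) \<le> norm (qpoch c q n)"
proof -
  have "norm c * (\<Sum>i<n. norm q ^ i) \<le> norm c * (1 / (1 - norm q))"
    using q by (intro mult_left_mono geometric_partial_sum_le) auto
  moreover have "1 - (\<Sum>i<n. norm (c*q^i)) \<le> norm (qpoch c q n)"
    unfolding qpoch_def by (rule norm_prod_one_minus_ge) simp
  ultimately show ?thesis by (simp add: norm_mult norm_power sum_distrib_left)
qed

lemma qpoch_norm_bounded_below:
  assumes q: "norm q < 1" and nz: "\<And>n. qpoch c q n \<noteq> 0"
  obtains \<delta> where "\<delta> > 0" "\<And>n. \<delta> \<le> norm (qpoch c q n)"
proof -
  have "(\<lambda>N. norm c * norm q ^ N / (1 - norm q)) \<longlonglongrightarrow> norm c * 0 / (1 - norm q)"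
    using q by (intro tendsto_intros LIMSEQ_power_zero) auto
  then have "eventually (\<lambda>N. norm c * norm q ^ N / (1 - norm q) < 1/2) sequentially"
    by (intro order_tendstoD) auto
  then obtain N where N: "norm (c*q^N) / (1 - norm q) < 1/2"
    by (auto simp: eventually_sequentially norm_mult norm_power)
  define \<delta> where "\<delta> = Min ((\<lambda>n. norm (qpoch c q n) / 2) ` {..N})"
  have \<delta>: "\<delta> > 0" unfolding \<delta>_def using nz by (subst Min_gr_iff) auto
  have \<delta>_le: "\<delta> \<le> norm (qpoch c q n) / 2" if "n \<le> N" for n
    unfolding \<delta>_def using that by (intro Min_le) auto
  have "\<delta> \<le> norm (qpoch c q n)" for n
  proof (cases "n \<le> N")
    case True
    then show ?thesis using \<delta>_le[of n] \<delta> by simp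
  next
    case False
    then obtain p where p: "n = N + p" using le_add_diff_inverse nat_le_linear by metis
    \<comment> \<open>beyond N the remaining factors have modulus at least 1/2\<close>
    have "1/2 \<le> norm (qpoch (c*q^N) q p)"
      using qpoch_norm_ge[OF q, of "c*q^N" p] N by linarith
    then have "norm (qpoch c q N) / 2 \<le> norm (qpoch c q N) * norm (qpoch (c*q^N) q p)"
      by (simp add: mult_left_mono[of "1/2" _ "norm (qpoch c q N)", simplified])
    then show ?thesis using \<delta>_le[of N] by (simp add: p qpoch_add norm_mult)
  qed
  then show ?thesis using \<delta> that by blast
qed

lemma qpoch_shift_norm_ge:
  assumes "\<And>n. \<delta> \<le> norm (qpoch c q n)" "norm (qpoch c q N) \<le> E" "E > 0"
  shows "\<delta> / E \<le> norm (qpoch (c*q^N) q n)"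
proof -
  have "\<delta> \<le> norm (qpoch c q (N+n))" by (rule assms(1))
  also have "\<dots> = norm (qpoch c q N) * norm (qpoch (c*q^N) q n)" by (simp add: qpoch_add norm_mult)
  also have "\<dots> \<le> E * norm (qpoch (c*q^N) q n)" using assms(2) by (intro mult_right_mono) auto
  finally show ?thesis using assms(3) by (simp add: field_simps)
qed

lemma shift_invariant_limit:
  fixes X :: "nat \<Rightarrow> 'a::t2_space"
  assumes "\<And>N. X (Suc N) = X N" and "X \<longlonglongrightarrow> L"
  shows "X 0 = L"
proof -
  have "X N = X 0" for N by (induction N) (simp_all add: assms(1))
  then have "X = (\<lambda>N. X 0)" by blast
  then show ?thesis using assms(2) by (metis LIMSEQ_const_iff)
qed

lemma convolution_geometric_tendsto_0:
  fixes d :: "nat \<Rightarrow> 'a::real_normed_vector"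
  assumes d: "summable (\<lambda>i. norm (d i))" and r: "0 \<le> r" "r < 1"
  shows "(\<lambda>N. \<Sum>i<N. norm (d i) * r^(N - i)) \<longlonglongrightarrow> 0"
proof -
  have "summable (\<lambda>k. norm (r^k))" using r by (simp add: summable_geometric)
  moreover have "summable (\<lambda>k. norm (norm (d k)))" using d by simp
  ultimately have "(\<lambda>k. \<Sum>i\<le>k. norm (d i) * r^(k - i)) sums ((\<Sum>k. norm (d k)) * (\<Sum>k. r^k))"
    using Cauchy_product_sums by fastforce
  then have "(\<lambda>k. r * (\<Sum>i\<le>k. norm (d i) * r^(k - i))) \<longlonglongrightarrow> r * 0"
    by (intro tendsto_intros summable_LIMSEQ_zero sums_summable)
  moreover have "r * (\<Sum>i\<le>k. norm (d i) * r^(k - i)) = (\<Sum>i<Suc k. norm (d i) * r^(Suc k - i))" for k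
    by (simp add: sum_distrib_left lessThan_Suc_atMost Suc_diff_le mult_ac)
  ultimately have "(\<lambda>k. \<Sum>i<Suc k. norm (d i) * r^(Suc k - i)) \<longlonglongrightarrow> 0" by simp
  then show ?thesis by (rule LIMSEQ_imp_Suc)
qed

lemma sum_lessThan_triangle:
  fixes N :: nat
  shows "(\<Sum>n<N. \<Sum>i\<le>n. f i (n - i)) = (\<Sum>i<N. \<Sum>m<N - i. f i m :: 'a::comm_monoid_add)"
proof -
  have "{(i, m). i + m < N} = Sigma {..<N} (\<lambda>i. {..<N - i})" by auto
  then have "(\<Sum>(i, m)\<in>{(i, m). i + m < N}. f i m) = (\<Sum>i<N. \<Sum>m<N - i. f i m)"
    by (simp add: sum.Sigma)
  then show ?thesis by (simp add: sum.triangle_reindex)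
qed

lemma sums_kernel_convolution:
  fixes d :: "nat \<Rightarrow> complex" and g :: "nat \<Rightarrow> nat \<Rightarrow> complex"
  assumes d: "summable (\<lambda>i. norm (d i))" and g: "\<And>i. g i sums 1"
    and bound: "\<And>i m. norm (g i m) \<le> C * r^m" and r: "0 \<le> r" "r < 1"
  shows "(\<lambda>n. \<Sum>i\<le>n. d i * g i (n - i)) sums (\<Sum>i. d i)"
proof -
  define T where "T i N = (\<Sum>m. g i (m + N))" for i N
  have head: "(\<Sum>m<N. g i m) = 1 - T i N" for i N
    using suminf_split_initial_segment[where k=N, OF sums_summable[OF g[of i]]] g[of i]
    by (simp add: T_def sums_iff eq_diff_eq add.commute)
  have tail: "norm (T i N) \<le> C * r^N / (1 - r)" for i N
  proof -
    have "norm (g i (m + N)) \<le> C * r^N * r^m" for m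
      using bound[of i "m + N"] by (simp add: power_add mult_ac)
    moreover have "summable (\<lambda>m. C * r^N * r^m)" using r by (intro summable_mult summable_geometric) simp
    ultimately have "norm (T i N) \<le> (\<Sum>m. C * r^N * r^m)"
      unfolding T_def by (rule norm_suminf_le)
    also have "\<dots> = C * r^N / (1 - r)" using r by (simp add: suminf_mult suminf_geometric)
    finally show ?thesis .
  qed
  have partial: "(\<Sum>n<N. \<Sum>i\<le>n. d i * g i (n - i)) = (\<Sum>i<N. d i) - (\<Sum>i<N. d i * T i (N - i))" for N
  proof -
    have "(\<Sum>n<N. \<Sum>i\<le>n. d i * g i (n - i)) = (\<Sum>i<N. \<Sum>m<N - i. d i * g i m)"
      by (rule sum_lessThan_triangle[of "\<lambda>i m. d i * g i m"])
    also have "\<dots> = (\<Sum>i<N. d i * (1 - T i (N - i)))"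
      by (simp add: sum_distrib_left[symmetric] head)
    also have "\<dots> = (\<Sum>i<N. d i) - (\<Sum>i<N. d i * T i (N - i))"
      by (simp add: algebra_simps sum_subtractf)
    finally show ?thesis .
  qed
  have "norm (\<Sum>i<N. d i * T i (N - i)) \<le> C / (1 - r) * (\<Sum>i<N. norm (d i) * r^(N - i))" for N
  proof -
    have "norm (d i * T i (N - i)) \<le> norm (d i) * (C * r^(N - i) / (1 - r))" for i
      unfolding norm_mult by (rule mult_left_mono[OF tail norm_ge_zero])
    then have "norm (\<Sum>i<N. d i * T i (N - i)) \<le> (\<Sum>i<N. norm (d i) * (C * r^(N - i) / (1 - r)))"
      by (rule order_trans[OF norm_sum sum_mono])
    also have "\<dots> = C / (1 - r) * (\<Sum>i<N. norm (d i) * r^(N - i))"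
      by (simp add: sum_distrib_left mult_ac)
    finally show ?thesis .
  qed
  moreover have "(\<lambda>N. C / (1 - r) * (\<Sum>i<N. norm (d i) * r^(N - i))) \<longlonglongrightarrow> 0"
    by (intro tendsto_mult_right_zero convolution_geometric_tendsto_0[OF d r])
  ultimately have "(\<lambda>N. \<Sum>i<N. d i * T i (N - i)) \<longlonglongrightarrow> 0"
    by (rule Lim_null_comparison[OF always_eventually[OF allI]])
  with summable_LIMSEQ[OF summable_norm_cancel[OF d]]
  have "(\<lambda>N. (\<Sum>i<N. d i) - (\<Sum>i<N. d i * T i (N - i))) \<longlonglongrightarrow> (\<Sum>i. d i) - 0"
    by (rule tendsto_diff)
  then show ?thesis unfolding sums_def partial by simp
qed

definition gsum :: "complex \<Rightarrow> complex" where
  "gsum c = c / (1 - c)"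

text \<open>As \<open>gsum c = c + c\<^sup>2 + c\<^sup>3 + \<dots>\<close>, adding \<open>gsum (-c)\<close> keeps twice the even powers.\<close>

lemma gsum_plus_gsum_uminus:
  assumes "1 - c \<noteq> 0" "1 + c \<noteq> 0"
  shows "gsum c + gsum (-c) = 2 * gsum (c^2)"
proof -
  have "1 - c^2 = (1 - c) * (1 + c)" by (simp add: algebra_simps power2_eq_square)
  with assms show ?thesis
    unfolding gsum_def by (simp add: divide_simps) (simp add: algebra_simps power2_eq_square)
qed

lemma boundary_partial_fractions:
  fixes x y z :: complex
  assumes "z \<noteq> 0" "y \<noteq> 0" "x \<noteq> 1" "y \<noteq> 1" "x \<noteq> z" "y \<noteq> z"
  shows "(1 - z) * (y/z) * (1 - x/y) * (1 - x*y/z) / ((1 - x) * (1 - x/z) * (1 - y) * (1 - y/z))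
    = gsum x + gsum (y/z) - gsum (x/z) - gsum y"
proof -
  have quot: "1 - x/z = (z - x)/z" "1 - y/z = (z - y)/z" "1 - x/y = (y - x)/y" "1 - x*y/z = (z - x*y)/z"
    using assms by (auto simp: field_simps)
  have "1 - x \<noteq> 0" "1 - y \<noteq> 0" "z - x \<noteq> 0" "z - y \<noteq> 0" using assms by auto
  with assms show ?thesis
    unfolding quot gsum_def by (simp add: divide_simps) algebra
qed

text \<open>
  \<open>vwp_term a k q z j P m\<close> is the \<open>m\<close>-th term of the series in column \<open>j\<close>; the argument \<open>P m\<close>
  stands for \<open>(q^j;q)_m\<close> when \<open>j \<ge> 1\<close> and for \<open>(q;q)_(m-1)\<close> in column 0, and only its
  recurrence \<open>P (m+1) = P m * (1 - q^(m+j))\<close> is used.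
\<close>

definition vwp_core ::
  "complex \<Rightarrow> complex \<Rightarrow> complex \<Rightarrow> complex \<Rightarrow> nat \<Rightarrow> (nat \<Rightarrow> complex) \<Rightarrow> nat \<Rightarrow> complex" where
  "vwp_core a k q z j P m =
     qpoch (z*q^j) q m * P m * qpoch (q*a) q j * qpoch (q*a/z) q j
       / (qpoch (q*k) q (j+m) * qpoch (q*k/z) q (j+m)) * (q*a/z)^m
       * qpoch (k/a) q m * qpoch k q (m+2*j) / (qpoch q q m * qpoch (a*q) q (m+2*j))"

definition vwp_term ::
  "complex \<Rightarrow> complex \<Rightarrow> complex \<Rightarrow> complex \<Rightarrow> nat \<Rightarrow> (nat \<Rightarrow> complex) \<Rightarrow> nat \<Rightarrow> complex" where
  "vwp_term a k q z j P m = (1 - k*q^(2*(m+j))) / (1 - k) * vwp_core a k q z j P m"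

definition vwp_cert ::
  "complex \<Rightarrow> complex \<Rightarrow> complex \<Rightarrow> complex \<Rightarrow> nat \<Rightarrow> (nat \<Rightarrow> complex) \<Rightarrow> nat \<Rightarrow> complex" where
  "vwp_cert a k q z j P m =
     (1 - q^m) * (1 - k*a*q^(m+2*j+1)/z) / ((1 - k) * (1 - q*a/z)) * vwp_core a k q z j P m"

text \<open>The telescoping identity with denominators cleared, in \<open>x = q\<^sup>m\<close>, \<open>y = q\<^sup>j\<close>, \<open>w = 1/z\<close>.\<close>

lemma vwp_polynomial_identity:
  fixes x y q a k w :: complex
  shows "(1-k*q*x*x*y*y)*(1-a*q*y)*(1-a*q*y*w)*(1-k*q*w)*x*(1-k*x*y*y)
     - (1-k*x*x*y*y)*(1-k*x*y*q)*(1-k*x*y*q*w)*(1-a*x*y*y*q)*(1-q*a*w)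
     = (w-x*y)*(1-x*y)*q*(a-k*x)*(1-k*x*y*y)*(1-k*a*q*q*x*y*y*w)
     - (1-k*x*y*q)*(1-k*x*y*q*w)*(1-a*x*y*y*q)*(1-x)*(1-k*a*q*x*y*y*w)"
  by algebra

lemma vwp_rational_identity:
  fixes a k q z x y :: complex
  assumes z: "z \<noteq> 0" and a: "a \<noteq> 0" and k: "1 - k \<noteq> 0" and qk: "1 - q*k \<noteq> 0"
    and qkz: "1 - q*k/z \<noteq> 0" and qa: "1 - q*a \<noteq> 0" and qaz: "1 - q*a/z \<noteq> 0"
    and nz: "1 - q*k*x*y \<noteq> 0" "1 - q*k*x*y/z \<noteq> 0" "1 - q*x \<noteq> 0" "1 - a*q*x*y^2 \<noteq> 0"
  shows "(1 - k*q*x^2*y^2)/(1 - k*q)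
      * ((1 - q*a*y)/(1 - q*a) * ((1 - q*a*y/z)/(1 - q*a/z))
         / ((1 - q*k*x*y)/(1 - q*k) * ((1 - q*k*x*y/z)/(1 - q*k/z)))
         * x * ((1 - k*x*y^2)/(1 - k)) / ((1 - a*q*x*y^2)/(1 - a*q)))
    - (1 - k*x^2*y^2)/(1 - k)
    = (1 - z*x*y)*(1 - x*y)*(q*a/z)*(1 - k/a*x)*(1 - k*x*y^2)
        / ((1 - q*k*x*y)*(1 - q*k*x*y/z)*(1 - q*x)*(1 - a*q*x*y^2))
      * ((1 - q*x)*(1 - k*a*q^2*x*y^2/z) / ((1 - k)*(1 - q*a/z)))
    - (1 - x)*(1 - k*a*q*x*y^2/z) / ((1 - k)*(1 - q*a/z))"
proof -
  define w where "w = 1/z"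
  have zw: "1/z = w" "a*q*y/z = a*q*y*w" "k*q/z = k*q*w" "k*x*y*q/z = k*x*y*q*w"
     "k*a*q*q*x*y*y/z = k*a*q*q*x*y*y*w" "k*a*q*x*y*y/z = k*a*q*x*y*y*w" "q*a/z = q*a*w"
    by (simp_all add: w_def)
  have kq: "1 - k*q \<noteq> 0" and aq: "1 - a*q \<noteq> 0" using qk qa by (simp_all add: mult.commute)
  define V where "V = (1-k*x*y*q)*(1-k*x*y*q/z)*(1-a*x*y*y*q)"
  have V: "V \<noteq> 0" using nz unfolding V_def by (simp add: mult_ac power2_eq_square)
  have lhs1: "(1 - k*q*x^2*y^2)/(1 - k*q)
      * ((1 - q*a*y)/(1 - q*a) * ((1 - q*a*y/z)/(1 - q*a/z))
         / ((1 - q*k*x*y)/(1 - q*k) * ((1 - q*k*x*y/z)/(1 - q*k/z)))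
         * x * ((1 - k*x*y^2)/(1 - k)) / ((1 - a*q*x*y^2)/(1 - a*q)))
     = (1-k*q*x*x*y*y)*(1-a*q*y)*(1-a*q*y/z)*(1-k*q/z)*x*(1-k*x*y*y)/((1-k)*(1-q*a/z)) / V"
    using nz qa qaz qk qkz k kq aq z V unfolding V_def by (simp add: divide_simps mult_ac power2_eq_square)
  have lhs2: "(1 - k*x^2*y^2)/(1 - k) = (1-k*x*x*y*y)*(1-k*x*y*q)*(1-k*x*y*q/z)*(1-a*x*y*y*q)/(1-k) / V"
    using V unfolding V_def by (simp add: power2_eq_square)
  have rhs1: "(1 - z*x*y)*(1 - x*y)*(q*a/z)*(1 - k/a*x)*(1 - k*x*y^2)
        / ((1 - q*k*x*y)*(1 - q*k*x*y/z)*(1 - q*x)*(1 - a*q*x*y^2))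
      * ((1 - q*x)*(1 - k*a*q^2*x*y^2/z) / ((1 - k)*(1 - q*a/z)))
     = (1/z-x*y)*(1-x*y)*q*(a-k*x)*(1-k*x*y*y)*(1-k*a*q*q*x*y*y/z)/((1-k)*(1-q*a/z)) / V"
    using nz qa qaz qk qkz k z a V unfolding V_def by (simp add: divide_simps mult_ac power2_eq_square)
  have rhs2: "(1 - x)*(1 - k*a*q*x*y^2/z) / ((1 - k)*(1 - q*a/z))
     = (1-k*x*y*q)*(1-k*x*y*q/z)*(1-a*x*y*y*q)*(1-x)*(1-k*a*q*x*y*y/z)/((1-k)*(1-q*a/z)) / V"
    unfolding V_def[symmetric] using V by (simp add: power2_eq_square)
  have "1 - q*a*w \<noteq> 0" using qaz by (simp add: w_def)
  then have "(1-k*q*x*x*y*y)*(1-a*q*y)*(1-a*q*y/z)*(1-k*q/z)*x*(1-k*x*y*y)/((1-k)*(1-q*a/z))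
     - (1-k*x*x*y*y)*(1-k*x*y*q)*(1-k*x*y*q/z)*(1-a*x*y*y*q)/(1-k)
     = (1/z-x*y)*(1-x*y)*q*(a-k*x)*(1-k*x*y*y)*(1-k*a*q*q*x*y*y/z)/((1-k)*(1-q*a/z))
     - (1-k*x*y*q)*(1-k*x*y*q/z)*(1-a*x*y*y*q)*(1-x)*(1-k*a*q*x*y*y/z)/((1-k)*(1-q*a/z))"
    unfolding zw using vwp_polynomial_identity[of k q x y a w] k by (simp add: divide_simps)
  then show ?thesis
    unfolding lhs1 lhs2 rhs1 rhs2 by (simp only: diff_divide_distrib[symmetric])
qed

lemma vwp_core_shift:
  assumes q: "q \<noteq> 0" and a: "a \<noteq> 0" and k: "1 - k \<noteq> 0" and qk: "1 - q*k \<noteq> 0"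
    and qkz: "1 - q*k/z \<noteq> 0" and qa: "1 - q*a \<noteq> 0" and qaz: "1 - q*a/z \<noteq> 0"
  shows "vwp_core (a*q) (k*q) q z j P m = vwp_core a k q z j P m
     * ((1 - q*a*q^j)/(1 - q*a) * ((1 - q*a*q^j/z)/(1 - q*a/z))
        / ((1 - q*k*q^m*q^j)/(1 - q*k) * ((1 - q*k*q^m*q^j/z)/(1 - q*k/z)))
        * q^m * ((1 - k*q^m*(q^j)^2)/(1 - k)) / ((1 - a*q*q^m*(q^j)^2)/(1 - a*q)))"
proof -
  have pw: "q^(j+m) = q^m*q^j" "q^(m+2*j) = q^m*(q^j)^2"
    by (simp_all add: power_add power_mult mult_ac)
  have aq: "1 - a*q \<noteq> 0" using qa by (simp add: mult.commute)
  have "qpoch (q*(a*q)) q j = qpoch (q*a) q j * (1 - q*a*q^j)/(1 - q*a)"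
    using qpoch_mult_base[OF qa, of q j] by (simp add: mult_ac)
  moreover have "qpoch (q*(a*q)/z) q j = qpoch (q*a/z) q j * (1 - q*a*q^j/z)/(1 - q*a/z)"
    using qpoch_mult_base[OF qaz, of q j] by (simp add: mult_ac)
  moreover have "qpoch (q*(k*q)) q (j+m) = qpoch (q*k) q (j+m) * (1 - q*k*q^m*q^j)/(1 - q*k)"
    using qpoch_mult_base[OF qk, of q "j+m"] unfolding pw by (simp add: mult_ac)
  moreover have "qpoch (q*(k*q)/z) q (j+m) = qpoch (q*k/z) q (j+m) * (1 - q*k*q^m*q^j/z)/(1 - q*k/z)"
    using qpoch_mult_base[OF qkz, of q "j+m"] unfolding pw by (simp add: mult_ac)
  moreover have "(q*(a*q)/z)^m = (q*a/z)^m * q^m"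
    by (simp add: power_mult_distrib[symmetric] mult_ac)
  moreover have "qpoch (k*q/(a*q)) q m = qpoch (k/a) q m" using q by simp
  moreover have "qpoch (k*q) q (m+2*j) = qpoch k q (m+2*j) * (1 - k*q^m*(q^j)^2)/(1 - k)"
    using qpoch_mult_base[OF k, of q "m+2*j"] unfolding pw by (simp add: mult_ac)
  moreover have "qpoch (a*q*q) q (m+2*j) = qpoch (a*q) q (m+2*j) * (1 - a*q*q^m*(q^j)^2)/(1 - a*q)"
    using qpoch_mult_base[OF aq, of q "m+2*j"] unfolding pw by (simp add: mult_ac)
  ultimately show ?thesis
    unfolding vwp_core_def by (simp add: divide_inverse mult_ac)
qed

lemma vwp_core_Suc:
  assumes P: "P (Suc m) = P m * (1 - q^m*q^j)"
  shows "vwp_core a k q z j P (Suc m) = vwp_core a k q z j P m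
     * ((1 - z*q^m*q^j)*(1 - q^m*q^j)*(q*a/z)*(1 - k/a*q^m)*(1 - k*q^m*(q^j)^2)
        / ((1 - q*k*q^m*q^j)*(1 - q*k*q^m*q^j/z)*(1 - q*q^m)*(1 - a*q*q^m*(q^j)^2)))"
proof -
  have pw: "q^(j+m) = q^m*q^j" "q^(m+2*j) = q^m*(q^j)^2"
    by (simp_all add: power_add power_mult mult_ac)
  have Suc: "j + Suc m = Suc (j+m)" "Suc m + 2*j = Suc (m+2*j)" by simp_all
  show ?thesis
    unfolding vwp_core_def P Suc qpoch_Suc pw power_Suc by (simp add: divide_inverse mult_ac)
qed

lemma vwp_term_shift_telescopes:
  assumes q: "q \<noteq> 0" and a: "a \<noteq> 0" and z: "z \<noteq> 0" and k: "1 - k \<noteq> 0"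
    and qk: "1 - q*k \<noteq> 0" and qkz: "1 - q*k/z \<noteq> 0" and qa: "1 - q*a \<noteq> 0" and qaz: "1 - q*a/z \<noteq> 0"
    and n1: "qpoch (q*k) q (Suc (j+m)) \<noteq> 0" and n2: "qpoch (q*k/z) q (Suc (j+m)) \<noteq> 0"
    and n3: "qpoch q q (Suc m) \<noteq> 0" and n4: "qpoch (a*q) q (Suc (m+2*j)) \<noteq> 0"
    and P: "P (Suc m) = P m * (1 - q^m*q^j)"
  shows "vwp_term (a*q) (k*q) q z j P m - vwp_term a k q z j P m
       = vwp_cert a k q z j P (Suc m) - vwp_cert a k q z j P m"
proof -
  define x where "x = q^m"
  define y where "y = q^j"
  have pw: "q^(j+m) = x*y" "q^(m+2*j) = x*y^2" "q^(2*(m+j)) = x^2*y^2" "q^(Suc m) = q*x"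
      "q^(Suc m + 2*j + 1) = q^2*x*y^2" "q^(m+2*j+1) = q*x*y^2"
    by (simp_all add: x_def y_def power_add power_mult power2_eq_square mult_ac)
  have "1 - q*k*x*y \<noteq> 0" "1 - q*k*x*y/z \<noteq> 0" "1 - q*x \<noteq> 0" "1 - a*q*x*y^2 \<noteq> 0"
    using n1 n2 n3 n4 by (simp_all add: qpoch_Suc x_def y_def power_add power_mult mult_ac)
  note rat = vwp_rational_identity[OF z a k qk qkz qa qaz this]
  define C where "C = vwp_core a k q z j P m"
  show ?thesis
    unfolding vwp_term_def vwp_cert_def vwp_core_shift[OF q a k qk qkz qa qaz] vwp_core_Suc[OF P]
    unfolding x_def[symmetric] y_def[symmetric] C_def[symmetric] pw
    using arg_cong[OF rat, of "\<lambda>t. C * t"] by (simp only: right_diff_distrib mult_ac)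
qed

locale vwp_bounds =
  fixes a k q z :: complex and Kb \<delta> :: real
  assumes norm_q: "norm q < 1"
    and bounded: "norm k \<le> Kb" "norm (k/a) \<le> Kb" "norm z \<le> Kb" "norm (q*a) \<le> Kb" "norm (q*a/z) \<le> Kb"
    and \<delta>_pos: "\<delta> > 0"
    and bounded_below: "\<And>n. \<delta> \<le> norm (qpoch (q*k) q n)" "\<And>n. \<delta> \<le> norm (qpoch (q*k/z) q n)"
      "\<And>n. \<delta> \<le> norm (qpoch q q n)" "\<And>n. \<delta> \<le> norm (qpoch (a*q) q n)" "\<delta> \<le> norm (1 - k)"
begin

definition qpoch_bound :: real where
  "qpoch_bound = exp (Kb / (1 - norm q))"

lemma norm_qpoch_le: "norm c \<le> Kb \<Longrightarrow> norm (qpoch c q n) \<le> qpoch_bound"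
  unfolding qpoch_bound_def by (rule qpoch_norm_le[OF norm_q])

lemma norm_mult_q_power_le: "norm c \<le> Kb \<Longrightarrow> norm (c * q^n) \<le> Kb"
proof -
  assume "norm c \<le> Kb"
  moreover have "norm (c * q^n) \<le> norm c" using norm_q
    by (simp add: norm_mult norm_power mult_left_le power_le_one)
  ultimately show ?thesis by linarith
qed

lemma norm_inverse_qpoch_le:
  "(\<And>n. \<delta> \<le> norm (qpoch c q n)) \<Longrightarrow> norm (inverse (qpoch c q n)) \<le> 1/\<delta>"
  using \<delta>_pos by (simp add: norm_inverse_le_of_ge)

lemma norm_vwp_core_le:
  assumes "norm (P m) \<le> Pb"
  shows "norm (vwp_core a k q z j P m) \<le> qpoch_bound^5 * Pb / \<delta>^4 * norm (q*a/z)^m"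
proof -
  have "vwp_core a k q z j P m = qpoch (z*q^j) q m * P m * qpoch (q*a) q j * qpoch (q*a/z) q j
      * qpoch (k/a) q m * qpoch k q (m+2*j) * inverse (qpoch (q*k) q (j+m)) * inverse (qpoch (q*k/z) q (j+m))
      * inverse (qpoch q q m) * inverse (qpoch (a*q) q (m+2*j)) * (q*a/z)^m"
    by (simp add: vwp_core_def divide_inverse mult_ac)
  moreover have "norm (qpoch (z*q^j) q m * P m * qpoch (q*a) q j * qpoch (q*a/z) q j
      * qpoch (k/a) q m * qpoch k q (m+2*j) * inverse (qpoch (q*k) q (j+m)) * inverse (qpoch (q*k/z) q (j+m))
      * inverse (qpoch q q m) * inverse (qpoch (a*q) q (m+2*j)) * (q*a/z)^m)
    \<le> qpoch_bound * Pb * qpoch_bound * qpoch_bound * qpoch_bound * qpoch_bound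
      * (1/\<delta>) * (1/\<delta>) * (1/\<delta>) * (1/\<delta>) * norm (q*a/z)^m"
    by (intro norm_mult_mono norm_qpoch_le norm_inverse_qpoch_le norm_mult_q_power_le bounded
        bounded_below assms) (simp add: norm_power)
  ultimately show ?thesis by (simp add: eval_nat_numeral mult_ac)
qed

lemma norm_vwp_term_le:
  assumes "norm (P m) \<le> Pb"
  shows "norm (vwp_term a k q z j P m) \<le> (1 + Kb) * (1/\<delta>) * (qpoch_bound^5 * Pb / \<delta>^4 * norm (q*a/z)^m)"
proof -
  have "norm (1 - k*q^(2*(m+j))) \<le> 1 + Kb"
    using norm_triangle_ineq4[of 1 "k*q^(2*(m+j))"] norm_mult_q_power_le[OF bounded(1), of "2*(m+j)"]
    by simp
  then have "norm ((1 - k*q^(2*(m+j))) * inverse (1 - k)) \<le> (1 + Kb) * (1/\<delta>)"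
    using bounded_below(5) \<delta>_pos by (intro norm_mult_mono norm_inverse_le_of_ge)
  then show ?thesis
    unfolding vwp_term_def divide_inverse
    by (rule norm_mult_mono[OF _ norm_vwp_core_le[where P=P and m=m, OF assms, unfolded divide_inverse]])
qed

lemma norm_vwp_cert_le:
  assumes "norm (P m) \<le> Pb" and qaz: "\<delta> \<le> norm (1 - q*a/z)"
  shows "norm (vwp_cert a k q z j P m)
    \<le> 2 * (1 + Kb^2) * (1/\<delta>) * (1/\<delta>) * (qpoch_bound^5 * Pb / \<delta>^4 * norm (q*a/z)^m)"
proof -
  have "norm q ^ m \<le> 1" using norm_q by (simp add: power_le_one)
  then have "norm (1 - q^m) \<le> 2"
    using norm_triangle_ineq4[of 1 "q^m"] by (simp add: norm_power)
  moreover have "norm (1 - k*a*q^(m+2*j+1)/z) \<le> 1 + Kb^2"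
  proof -
    have "k*a*q^(m+2*j+1)/z = k * (q*a/z * q^(m+2*j))" by (simp add: power_add divide_inverse mult_ac)
    then have "norm (k*a*q^(m+2*j+1)/z) \<le> Kb * Kb"
      by (metis norm_mult_mono[OF bounded(1) norm_mult_q_power_le[OF bounded(5)]])
    then show ?thesis
      using norm_triangle_ineq4[of 1 "k*a*q^(m+2*j+1)/z"] by (simp add: power2_eq_square)
  qed
  ultimately have factor: "norm ((1 - q^m) * (1 - k*a*q^(m+2*j+1)/z) * inverse (1 - k) * inverse (1 - q*a/z))
      \<le> 2 * (1 + Kb^2) * (1/\<delta>) * (1/\<delta>)"
    using bounded_below(5) qaz \<delta>_pos by (intro norm_mult_mono norm_inverse_le_of_ge)
  have "vwp_cert a k q z j P m
      = (1 - q^m) * (1 - k*a*q^(m+2*j+1)/z) * inverse (1 - k) * inverse (1 - q*a/z) * vwp_core a k q z j P m"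
    by (simp add: vwp_cert_def divide_inverse)
  then show ?thesis
    by (simp only:) (rule norm_mult_mono[OF factor norm_vwp_core_le[where P=P and m=m, OF assms(1)]])
qed

end

locale wp_admissible =
  fixes a k q z :: complex
  assumes q_nonzero: "q \<noteq> 0" and norm_q: "norm q < 1" and a_nonzero: "a \<noteq> 0" and z_nonzero: "z \<noteq> 0"
    and k_ne_1: "k \<noteq> 1" and norm_qa_less: "norm (q*a) < norm z"
    and qpoch_nonzero: "\<And>n. qpoch (q*k) q n \<noteq> 0" "\<And>n. qpoch (q*k/z) q n \<noteq> 0"
      "\<And>n. qpoch (q*a) q n \<noteq> 0" "\<And>n. qpoch (q*a/z) q n \<noteq> 0"
begin

lemma qpoch_aq_nonzero: "qpoch (a*q) q n \<noteq> 0"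
  using qpoch_nonzero(3) by (simp add: mult.commute)

lemma one_minus_nonzero: "1 - k \<noteq> 0" "1 - q*k \<noteq> 0" "1 - q*k/z \<noteq> 0" "1 - q*a \<noteq> 0" "1 - q*a/z \<noteq> 0"
  using k_ne_1 qpoch_nonzero[of 1] by (simp_all add: qpoch_def)

lemma norm_ratio_less_1: "norm (q*a/z) < 1"
  using norm_qa_less z_nonzero by (simp add: norm_divide divide_less_eq)

lemma shift: "wp_admissible (a*q) (k*q) q z"
proof -
  have "norm (q*(a*q)) = norm q * norm (q*a)" by (simp add: norm_mult mult_ac)
  also have "\<dots> \<le> norm (q*a)" using norm_q by (simp add: mult_left_le_one_le)
  finally have "norm (q*(a*q)) < norm z" using norm_qa_less by linarith
  moreover have "k*q \<noteq> 1" using one_minus_nonzero(2) by (simp add: mult.commute)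
  moreover have "qpoch (q*(c*q)) q n \<noteq> 0" if "\<And>n. qpoch (q*c) q n \<noteq> 0" for c n
    using that[of "Suc n"] by (simp add: qpoch_Suc_shift mult_ac)
  moreover have "qpoch (q*(c*q)/z) q n \<noteq> 0" if "\<And>n. qpoch (q*c/z) q n \<noteq> 0" for c n
    using that[of "Suc n"] by (simp add: qpoch_Suc_shift mult_ac)
  ultimately show ?thesis
    unfolding wp_admissible_def using q_nonzero norm_q a_nonzero z_nonzero qpoch_nonzero by auto
qed

lemma shift_power: "wp_admissible (a*q^N) (k*q^N) q z"
proof (induction N)
  case 0
  show ?case by (simp add: wp_admissible_axioms)
next
  case (Suc N)
  show ?case using wp_admissible.shift[OF Suc.IH] by (simp add: mult_ac)
qed

lemma vwp_bounds_exist: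
  obtains Kb \<delta> where "vwp_bounds a k q z Kb \<delta>" "\<delta> \<le> norm (1 - q*a/z)"
proof -
  obtain d1 where d1: "d1 > 0" "\<And>n. d1 \<le> norm (qpoch (q*k) q n)"
    using qpoch_norm_bounded_below[OF norm_q qpoch_nonzero(1)] by blast
  obtain d2 where d2: "d2 > 0" "\<And>n. d2 \<le> norm (qpoch (q*k/z) q n)"
    using qpoch_norm_bounded_below[OF norm_q qpoch_nonzero(2)] by blast
  obtain d3 where d3: "d3 > 0" "\<And>n. d3 \<le> norm (qpoch q q n)"
    using qpoch_norm_bounded_below[OF norm_q qpoch_q_nonzero[OF norm_q]] by blast
  obtain d4 where d4: "d4 > 0" "\<And>n. d4 \<le> norm (qpoch (a*q) q n)"
    using qpoch_norm_bounded_below[OF norm_q qpoch_aq_nonzero] by blast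
  define \<delta> where "\<delta> = Min {d1, d2, d3, d4, norm (1 - k), norm (1 - q*a/z)}"
  define Kb where "Kb = Max {norm k, norm (k/a), norm z, norm (q*a), norm (q*a/z)}"
  have \<delta>: "\<delta> > 0" unfolding \<delta>_def using d1 d2 d3 d4 one_minus_nonzero by simp
  have \<delta>_le: "\<delta> \<le> d1" "\<delta> \<le> d2" "\<delta> \<le> d3" "\<delta> \<le> d4" "\<delta> \<le> norm (1 - k)"
      "\<delta> \<le> norm (1 - q*a/z)"
    unfolding \<delta>_def by auto
  have "vwp_bounds a k q z Kb \<delta>"
  proof
    show "norm k \<le> Kb" "norm (k/a) \<le> Kb" "norm z \<le> Kb" "norm (q*a) \<le> Kb" "norm (q*a/z) \<le> Kb"
      unfolding Kb_def by auto
    show "\<delta> \<le> norm (qpoch (q*k) q n)" "\<delta> \<le> norm (qpoch (q*k/z) q n)" "\<delta> \<le> norm (qpoch q q n)"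
      "\<delta> \<le> norm (qpoch (a*q) q n)" for n
      using \<delta>_le d1(2)[of n] d2(2)[of n] d3(2)[of n] d4(2)[of n] by linarith+
  qed (use norm_q \<delta> \<delta>_le in auto)
  then show ?thesis using that \<delta>_le by blast
qed

lemma vwp_geometric_bound:
  "\<exists>C. \<forall>j P m. norm (P m) \<le> Pb \<longrightarrow>
     norm (vwp_term a k q z j P m) \<le> C * norm (q*a/z)^m \<and> norm (vwp_cert a k q z j P m) \<le> C * norm (q*a/z)^m"
proof -
  obtain Kb \<delta> where b: "vwp_bounds a k q z Kb \<delta>" and qaz: "\<delta> \<le> norm (1 - q*a/z)" by (rule vwp_bounds_exist)
  interpret vwp_bounds a k q z Kb \<delta> by (rule b)
  define C1 where "C1 = (1 + Kb) * (1/\<delta>) * (qpoch_bound^5 * Pb / \<delta>^4)"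
  define C2 where "C2 = 2 * (1 + Kb^2) * (1/\<delta>) * (1/\<delta>) * (qpoch_bound^5 * Pb / \<delta>^4)"
  have "norm (vwp_term a k q z j P m) \<le> max C1 C2 * norm (q*a/z)^m
      \<and> norm (vwp_cert a k q z j P m) \<le> max C1 C2 * norm (q*a/z)^m"
    if P: "norm (P m) \<le> Pb" for j m and P :: "nat \<Rightarrow> complex"
  proof
    have "norm (vwp_term a k q z j P m) \<le> C1 * norm (q*a/z)^m"
      using norm_vwp_term_le[where P=P and m=m, OF P] unfolding C1_def by (simp only: mult.assoc)
    also have "\<dots> \<le> max C1 C2 * norm (q*a/z)^m" by (simp add: mult_right_mono)
    finally show "norm (vwp_term a k q z j P m) \<le> max C1 C2 * norm (q*a/z)^m" .
    have "norm (vwp_cert a k q z j P m) \<le> C2 * norm (q*a/z)^m"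
      using norm_vwp_cert_le[where P=P and m=m, OF P qaz] unfolding C2_def by (simp only: mult.assoc)
    also have "\<dots> \<le> max C1 C2 * norm (q*a/z)^m" by (simp add: mult_right_mono)
    finally show "norm (vwp_cert a k q z j P m) \<le> max C1 C2 * norm (q*a/z)^m" .
  qed
  then show ?thesis by blast
qed

lemma vwp_term_summable:
  assumes P: "\<And>m. norm (P m) \<le> Pb"
  shows "summable (vwp_term a k q z j P)"
proof -
  obtain C where C: "\<forall>j P m. norm (P m) \<le> Pb \<longrightarrow>
     norm (vwp_term a k q z j P m) \<le> C * norm (q*a/z)^m \<and> norm (vwp_cert a k q z j P m) \<le> C * norm (q*a/z)^m"
    using vwp_geometric_bound by blast
  have "summable (\<lambda>m. C * norm (q*a/z)^m)"
    using norm_ratio_less_1 by (intro summable_mult summable_geometric) simp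
  then show ?thesis
    by (rule summable_comparison_test'[where N=0]) (use C P in blast)
qed

lemma vwp_cert_tendsto_0:
  assumes P: "\<And>m. norm (P m) \<le> Pb"
  shows "vwp_cert a k q z j P \<longlonglongrightarrow> 0"
proof -
  obtain C where C: "\<forall>j P m. norm (P m) \<le> Pb \<longrightarrow>
     norm (vwp_term a k q z j P m) \<le> C * norm (q*a/z)^m \<and> norm (vwp_cert a k q z j P m) \<le> C * norm (q*a/z)^m"
    using vwp_geometric_bound by blast
  have "\<forall>m. norm (vwp_cert a k q z j P m) \<le> C * norm (q*a/z)^m" using C P by blast
  moreover have "(\<lambda>m. C * norm (q*a/z)^m) \<longlonglongrightarrow> 0"
    using norm_ratio_less_1 by (intro tendsto_mult_right_zero LIMSEQ_power_zero) simp
  ultimately show ?thesis by (rule Lim_null_comparison[OF always_eventually])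
qed

lemma vwp_term_shift_sums:
  assumes P: "\<And>m. norm (P m) \<le> Pb" and rec: "\<And>m. s \<le> m \<Longrightarrow> P (Suc m) = P m * (1 - q^m*q^j)"
  shows "(\<lambda>m. vwp_term (a*q) (k*q) q z j P (m+s))
           sums ((\<Sum>m. vwp_term a k q z j P (m+s)) - vwp_cert a k q z j P s)"
proof -
  have tel: "vwp_term (a*q) (k*q) q z j P (m+s) = vwp_term a k q z j P (m+s)
      + (vwp_cert a k q z j P (Suc (m+s)) - vwp_cert a k q z j P (m+s))" for m
    using vwp_term_shift_telescopes[OF q_nonzero a_nonzero z_nonzero one_minus_nonzero
        qpoch_nonzero(1,2) qpoch_q_nonzero[OF norm_q] qpoch_aq_nonzero rec[of "m+s"]]
    by (simp add: algebra_simps)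
  have "(\<lambda>m. vwp_term a k q z j P (m+s)) sums (\<Sum>m. vwp_term a k q z j P (m+s))"
    using summable_ignore_initial_segment[OF vwp_term_summable[OF P]] by (rule summable_sums)
  moreover have "(\<lambda>m. vwp_cert a k q z j P (Suc (m+s)) - vwp_cert a k q z j P (m+s))
      sums (0 - vwp_cert a k q z j P s)"
    using telescope_sums[OF LIMSEQ_ignore_initial_segment[where k=s, OF vwp_cert_tendsto_0[OF P]]]
    by simp
  ultimately show ?thesis
    unfolding tel using sums_add by fastforce
qed

lemma vwp_bounds_shifted: "\<exists>Kb \<delta> N0. \<forall>N\<ge>N0. vwp_bounds (a*q^N) (k*q^N) q z Kb \<delta>"
proof -
  obtain Kb \<delta> where b: "vwp_bounds a k q z Kb \<delta>" by (rule vwp_bounds_exist)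
  interpret vwp_bounds a k q z Kb \<delta> by (rule b)
  define E where "E c = exp (norm c / (1 - norm q))" for c :: complex
  have E: "E c > 0" "norm (qpoch c q n) \<le> E c" for c n
    unfolding E_def by (auto intro: qpoch_norm_le[OF norm_q])
  \<comment> \<open>(c q^N; q)_n = (c; q)_(N+n) / (c; q)_N is bounded below uniformly in N\<close>
  define \<delta>' where "\<delta>' = Min {\<delta> / E (q*k), \<delta> / E (q*k/z), \<delta>, \<delta> / E (a*q), 1/2}"
  have \<delta>': "\<delta>' > 0" unfolding \<delta>'_def using E \<delta>_pos by simp
  have "eventually (\<lambda>N. norm k * norm q ^ N < 1/2) sequentially"
    using norm_q by (intro order_tendstoD(2)[OF tendsto_mult_right_zero[OF LIMSEQ_power_zero]]) auto
  then obtain N0 where N0: "\<And>N. N0 \<le> N \<Longrightarrow> norm k * norm q ^ N < 1/2"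
    by (auto simp: eventually_sequentially)
  have "vwp_bounds (a*q^N) (k*q^N) q z Kb \<delta>'" if N: "N0 \<le> N" for N
  proof
    show "norm q < 1" "0 < \<delta>'" "norm z \<le> Kb" by (fact norm_q \<delta>' bounded(3))+
    show "norm (k*q^N) \<le> Kb" by (rule norm_mult_q_power_le[OF bounded(1)])
    show "norm (k*q^N / (a*q^N)) \<le> Kb" using bounded(2) q_nonzero by simp
    show "norm (q*(a*q^N)) \<le> Kb" "norm (q*(a*q^N)/z) \<le> Kb"
      using norm_mult_q_power_le[OF bounded(4), of N] norm_mult_q_power_le[OF bounded(5), of N]
      by (simp_all add: mult_ac)
    fix n
    show "\<delta>' \<le> norm (qpoch (q*(k*q^N)) q n)"
      using qpoch_shift_norm_ge[where N=N and n=n, OF bounded_below(1) E(2) E(1)] unfolding \<delta>'_def by (simp add: mult_ac)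
    show "\<delta>' \<le> norm (qpoch (q*(k*q^N)/z) q n)"
      using qpoch_shift_norm_ge[where N=N and n=n, OF bounded_below(2) E(2) E(1)] unfolding \<delta>'_def by (simp add: mult_ac)
    show "\<delta>' \<le> norm (qpoch q q n)"
      using bounded_below(3)[of n] unfolding \<delta>'_def by simp
    show "\<delta>' \<le> norm (qpoch (a*q^N*q) q n)"
      using qpoch_shift_norm_ge[where N=N and n=n, OF bounded_below(4) E(2) E(1)] unfolding \<delta>'_def by (simp add: mult_ac)
  next
    have "1 - norm (k*q^N) \<le> norm (1 - k*q^N)" using norm_triangle_ineq3[of 1 "k*q^N"] by simp
    moreover have "norm (k*q^N) < 1/2" using N0[OF N] by (simp add: norm_mult norm_power)
    ultimately show "\<delta>' \<le> norm (1 - k*q^N)" unfolding \<delta>'_def by simp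
  qed
  then show ?thesis by blast
qed

lemma vwp_term_shifted_bound:
  "\<exists>C\<ge>0. \<exists>N0. \<forall>N\<ge>N0. \<forall>j P m. norm (P m) \<le> Pb \<longrightarrow>
     norm (vwp_term (a*q^N) (k*q^N) q z j P m) \<le> C * norm (q*a/z)^m * (norm q ^ N)^m"
proof -
  obtain Kb \<delta> N0 where b: "\<forall>N\<ge>N0. vwp_bounds (a*q^N) (k*q^N) q z Kb \<delta>"
    using vwp_bounds_shifted by blast
  define C where "C = (1 + Kb) * (1/\<delta>) * (exp (Kb / (1 - norm q))^5 * Pb / \<delta>^4)"
  have "norm (vwp_term (a*q^N) (k*q^N) q z j P m) \<le> \<bar>C\<bar> * norm (q*a/z)^m * (norm q ^ N)^m"
    if N: "N0 \<le> N" and P: "norm (P m) \<le> Pb" for N j m and P :: "nat \<Rightarrow> complex"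
  proof -
    interpret vwp_bounds "a*q^N" "k*q^N" q z Kb \<delta> using b N by blast
    have "norm (q*(a*q^N)/z) = norm (q*a/z) * norm q ^ N" by (simp add: norm_mult norm_divide norm_power)
    then have "norm (vwp_term (a*q^N) (k*q^N) q z j P m) \<le> C * (norm (q*a/z) * norm q ^ N)^m"
      using norm_vwp_term_le[where P=P and m=m and j=j, OF P] unfolding C_def qpoch_bound_def
      by (simp only: mult.assoc)
    also have "\<dots> \<le> \<bar>C\<bar> * (norm (q*a/z) * norm q ^ N)^m" by (simp add: mult_right_mono)
    finally show ?thesis by (simp add: power_mult_distrib mult.assoc)
  qed
  then have "\<forall>N\<ge>N0. \<forall>j P m. norm (P m) \<le> Pb \<longrightarrow>
      norm (vwp_term (a*q^N) (k*q^N) q z j P m) \<le> \<bar>C\<bar> * norm (q*a/z)^m * (norm q ^ N)^m"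
    by blast
  then show ?thesis using abs_ge_zero[of C] by blast
qed

lemma vwp_term_0_shifted_tendsto:
  "(\<lambda>N. vwp_term (a*q^N) (k*q^N) q z j P 0) \<longlonglongrightarrow> P 0"
proof -
  have to_0: "(\<lambda>N. c * q^N) \<longlonglongrightarrow> 0" for c :: complex
    by (intro tendsto_mult_right_zero LIMSEQ_power_zero norm_q)
  have to_1: "(\<lambda>N. qpoch (c * q^N) q n) \<longlonglongrightarrow> 1" for c n
    by (rule qpoch_tendsto_1[OF to_0])
  have "vwp_term (a*q^N) (k*q^N) q z j P 0 =
     (1 - (k*q^(2*j)) * q^N) / (1 - k*q^N) * P 0 * qpoch ((q*a) * q^N) q j * qpoch ((q*a/z) * q^N) q j
      / (qpoch ((q*k)*q^N) q j * qpoch ((q*k/z)*q^N) q j) * qpoch (k*q^N) q (2*j) / qpoch ((a*q)*q^N) q (2*j)"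
    for N
    using a_nonzero q_nonzero by (simp add: vwp_term_def vwp_core_def mult_ac)
  moreover have "(\<lambda>N. (1 - (k*q^(2*j)) * q^N) / (1 - k*q^N) * P 0 * qpoch ((q*a) * q^N) q j
      * qpoch ((q*a/z) * q^N) q j / (qpoch ((q*k)*q^N) q j * qpoch ((q*k/z)*q^N) q j)
      * qpoch (k*q^N) q (2*j) / qpoch ((a*q)*q^N) q (2*j))
     \<longlonglongrightarrow> (1 - 0) / (1 - 0) * P 0 * 1 * 1 / (1 * 1) * 1 / 1"
    by (intro tendsto_intros to_0 to_1) auto
  ultimately show ?thesis by simp
qed

lemma vwp_term_shifted_tendsto_0:
  assumes P: "\<And>m. norm (P m) \<le> Pb" and m: "1 \<le> m"
  shows "(\<lambda>N. vwp_term (a*q^N) (k*q^N) q z j P m) \<longlonglongrightarrow> 0"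
proof -
  obtain C N0 where C: "C \<ge> 0" "\<forall>N\<ge>N0. \<forall>j P m. norm (P m) \<le> Pb \<longrightarrow>
      norm (vwp_term (a*q^N) (k*q^N) q z j P m) \<le> C * norm (q*a/z)^m * (norm q ^ N)^m"
    using vwp_term_shifted_bound by blast
  have "norm (vwp_term (a*q^N) (k*q^N) q z j P m) \<le> C * norm (q*a/z)^m * norm q ^ N" if "N0 \<le> N" for N
  proof -
    have "(norm q ^ N)^m \<le> (norm q ^ N)^1"
      by (rule power_decreasing) (use m norm_q in \<open>auto simp: power_le_one\<close>)
    then have "C * norm (q*a/z)^m * (norm q ^ N)^m \<le> C * norm (q*a/z)^m * norm q ^ N"
      using C(1) by (simp add: mult_left_mono)
    then show ?thesis using C(2) that P by (meson order_trans)
  qed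
  then have "eventually (\<lambda>N. norm (vwp_term (a*q^N) (k*q^N) q z j P m)
      \<le> C * norm (q*a/z)^m * norm q ^ N) sequentially"
    unfolding eventually_sequentially by blast
  moreover have "(\<lambda>N. C * norm (q*a/z)^m * norm q ^ N) \<longlonglongrightarrow> 0"
    by (intro tendsto_mult_right_zero LIMSEQ_power_zero) (use norm_q in simp)
  ultimately show ?thesis by (rule Lim_null_comparison)
qed

lemma vwp_term_shifted_suminf_tendsto:
  assumes P: "\<And>m. norm (P m) \<le> Pb"
  shows "(\<lambda>N. \<Sum>m. vwp_term (a*q^N) (k*q^N) q z j P (m+s)) \<longlonglongrightarrow> (if s = 0 then P 0 else 0)"
proof -
  obtain C N0 where C: "C \<ge> 0" "\<forall>N\<ge>N0. \<forall>j P m. norm (P m) \<le> Pb \<longrightarrow>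
      norm (vwp_term (a*q^N) (k*q^N) q z j P m) \<le> C * norm (q*a/z)^m * (norm q ^ N)^m"
    using vwp_term_shifted_bound by blast
  define r where "r = norm (q*a/z)"
  have r: "0 \<le> r" "r < 1" using norm_ratio_less_1 by (auto simp: r_def)
  have "norm (vwp_term (a*q^N) (k*q^N) q z j P (m+s)) \<le> C * r^(m+s)" if "N0 \<le> N" for m N
  proof -
    have "(norm q ^ N)^(m+s) \<le> 1" using norm_q by (simp add: power_le_one)
    then have "C * r^(m+s) * (norm q ^ N)^(m+s) \<le> C * r^(m+s)"
      using C(1) r by (simp add: mult_left_le)
    then show ?thesis using C(2) that P unfolding r_def by (meson order_trans)
  qed
  moreover have "eventually (\<lambda>x. True \<and> N0 \<le> snd x) (at_top \<times>\<^sub>F sequentially)"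
    by (intro eventually_prodI) (auto simp: eventually_sequentially)
  ultimately have dom: "eventually (\<lambda>(m, N). norm (vwp_term (a*q^N) (k*q^N) q z j P (m+s))
      \<le> C * r^(m+s)) (at_top \<times>\<^sub>F sequentially)"
    by (auto elim!: eventually_mono)
  have lim: "(\<lambda>N. vwp_term (a*q^N) (k*q^N) q z j P (m+s))
      \<longlonglongrightarrow> (if m = 0 then (if s = 0 then P 0 else 0) else 0)" for m
  proof (cases "m + s = 0")
    case True
    then show ?thesis using vwp_term_0_shifted_tendsto by simp
  next
    case False
    then have "(if m = 0 then (if s = 0 then P 0 else 0) else 0) = 0" by auto
    with vwp_term_shifted_tendsto_0[OF P, of "m+s"] False show ?thesis by simp
  qed
  have "summable (\<lambda>m. C * r^(m+s))"
    using r by (intro summable_mult summable_ignore_initial_segment summable_geometric) simp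
  from tannerys_theorem[OF lim dom this] show ?thesis
    using sums_single[of 0 "\<lambda>_. if s = 0 then P 0 else 0"] by (simp add: sums_iff)
qed

lemma vwp_term_sums_1: "vwp_term a k q z j (qpoch (q^j) q) sums 1"
proof -
  define P where "P = qpoch (q^j) q"
  have P: "norm (P m) \<le> exp (1 / (1 - norm q))" for m
    unfolding P_def using norm_q by (intro qpoch_norm_le) (simp_all add: norm_power power_le_one)
  define S where "S = (\<lambda>N. \<Sum>m. vwp_term (a*q^N) (k*q^N) q z j P (m+0))"
  have "S (Suc N) = S N" for N
  proof -
    interpret shifted: wp_admissible "a*q^N" "k*q^N" q z by (rule shift_power)
    have "(\<lambda>m. vwp_term (a*q^N*q) (k*q^N*q) q z j P (m+0))
        sums (S N - vwp_cert (a*q^N) (k*q^N) q z j P 0)"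
      unfolding S_def by (rule shifted.vwp_term_shift_sums[OF P]) (simp add: P_def qpoch_Suc mult_ac)
    then show ?thesis by (simp add: S_def sums_iff vwp_cert_def mult_ac)
  qed
  moreover have "S \<longlonglongrightarrow> 1"
    using vwp_term_shifted_suminf_tendsto[where P=P and j=j and s=0, OF P] by (simp add: S_def P_def)
  ultimately have "S 0 = 1" by (rule shift_invariant_limit)
  then show ?thesis
    using summable_sums[OF vwp_term_summable[where P=P and j=j, OF P]] by (simp add: S_def P_def)
qed

end

definition wp_boundary :: "complex \<Rightarrow> complex \<Rightarrow> complex \<Rightarrow> complex \<Rightarrow> complex" where
  "wp_boundary a k q z = gsum (q*k) + gsum (q*a/z) - gsum (q*k/z) - gsum (q*a)"

text \<open>The column \<open>j = 0\<close> left over when a \<open>\<beta>\<close>-series is rewritten as an \<open>\<alpha>\<close>-series.\<close>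

definition wp_remainder :: "complex \<Rightarrow> complex \<Rightarrow> complex \<Rightarrow> complex \<Rightarrow> complex" where
  "wp_remainder a k q z = (\<Sum>m. vwp_term a k q z 0 (\<lambda>n. qpoch q q (n - 1)) (m + 1))"

context wp_admissible
begin

lemma vwp_cert_1_eq_boundary: "vwp_cert a k q z 0 (\<lambda>n. qpoch q q (n - 1)) 1 = wp_boundary a k q z"
proof -
  have q1: "1 - q \<noteq> 0" using qpoch_q_nonzero[OF norm_q, of 1] by (simp add: qpoch_def)
  have "vwp_cert a k q z 0 (\<lambda>n. qpoch q q (n - 1)) 1
      = (1 - z) * (q*a/z) * (1 - k/a) * (1 - k*a*q*q/z) / ((1 - q*k) * (1 - q*k/z) * (1 - a*q) * (1 - q*a/z))
        * ((1 - k) * inverse (1 - k)) * ((1 - q) * inverse (1 - q))"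
    by (simp add: vwp_cert_def vwp_core_def qpoch_def divide_inverse mult_ac power2_eq_square)
  also have "\<dots> = (1 - z) * ((q*a)/z) * (1 - (q*k)/(q*a)) * (1 - (q*k)*(q*a)/z)
      / ((1 - q*k) * (1 - (q*k)/z) * (1 - q*a) * (1 - (q*a)/z))"
    using one_minus_nonzero(1) q1 q_nonzero a_nonzero by (simp add: mult_ac)
  also have "\<dots> = wp_boundary a k q z"
    unfolding wp_boundary_def using one_minus_nonzero q_nonzero a_nonzero z_nonzero
    by (intro boundary_partial_fractions) (auto simp: field_simps)
  finally show ?thesis .
qed

lemma remainder_shift: "wp_remainder (a*q) (k*q) q z = wp_remainder a k q z - wp_boundary a k q z"
proof -
  define P where "P = (\<lambda>n. qpoch q q (n - 1))"
  have P: "norm (P m) \<le> exp (1 / (1 - norm q))" for m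
    unfolding P_def using norm_q by (intro qpoch_norm_le) simp_all
  have rec: "P (Suc m) = P m * (1 - q^m * q^0)" if "1 \<le> m" for m
    using that by (cases m) (simp_all add: P_def qpoch_Suc mult_ac)
  have "(\<lambda>m. vwp_term (a*q) (k*q) q z 0 P (m+1)) sums (wp_remainder a k q z - vwp_cert a k q z 0 P 1)"
    unfolding wp_remainder_def P_def[symmetric] by (rule vwp_term_shift_sums[OF P rec])
  then show ?thesis
    using vwp_cert_1_eq_boundary by (simp add: wp_remainder_def P_def sums_iff)
qed

lemma remainder_shifted_tendsto_0: "(\<lambda>N. wp_remainder (a*q^N) (k*q^N) q z) \<longlonglongrightarrow> 0"
proof -
  have "norm (qpoch q q (m - 1)) \<le> exp (1 / (1 - norm q))" for m
    using norm_q by (intro qpoch_norm_le) simp_all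
  from vwp_term_shifted_suminf_tendsto[where P="\<lambda>n. qpoch q q (n - 1)" and j=0 and s=1, OF this]
  show ?thesis by (simp add: wp_remainder_def)
qed

end

lemma boundary_combination:
  assumes "wp_admissible a k q z" "wp_admissible (-a) (-k) q z"
  shows "wp_boundary a k q z + wp_boundary (-a) (-k) q z - 2 * wp_boundary (a^2) (k^2) (q^2) (z^2) = 0"
proof -
  interpret plus: wp_admissible a k q z by (rule assms(1))
  interpret minus: wp_admissible "-a" "-k" q z by (rule assms(2))
  have pair: "gsum c + gsum (-c) - 2 * gsum (c^2) = 0" if "1 - c \<noteq> 0" "1 - (-c) \<noteq> 0" for c
    using gsum_plus_gsum_uminus[of c] that by simp
  have "gsum (q*k) + gsum (-(q*k)) - 2 * gsum ((q*k)^2) = 0"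
    using pair plus.one_minus_nonzero(2) minus.one_minus_nonzero(2) by simp
  moreover have "gsum (q*a/z) + gsum (-(q*a/z)) - 2 * gsum ((q*a/z)^2) = 0"
    using pair plus.one_minus_nonzero(5) minus.one_minus_nonzero(5) by simp
  moreover have "gsum (q*k/z) + gsum (-(q*k/z)) - 2 * gsum ((q*k/z)^2) = 0"
    using pair plus.one_minus_nonzero(3) minus.one_minus_nonzero(3) by simp
  moreover have "gsum (q*a) + gsum (-(q*a)) - 2 * gsum ((q*a)^2) = 0"
    using pair plus.one_minus_nonzero(4) minus.one_minus_nonzero(4) by simp
  ultimately show ?thesis
    unfolding wp_boundary_def by (simp add: power_mult_distrib power_divide algebra_simps)
qed

lemma remainder_combination:
  assumes A: "wp_admissible a k q z" and B: "wp_admissible (-a) (-k) q z"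
    and C: "wp_admissible (a^2) (k^2) (q^2) (z^2)"
  shows "wp_remainder a k q z + wp_remainder (-a) (-k) q z - 2 * wp_remainder (a^2) (k^2) (q^2) (z^2) = 0"
proof -
  define D where "D = (\<lambda>N. wp_remainder (a*q^N) (k*q^N) q z + wp_remainder (-(a*q^N)) (-(k*q^N)) q z
    - 2 * wp_remainder ((a*q^N)^2) ((k*q^N)^2) (q^2) (z^2))"
  have squares: "(c*q^N)^2 = c^2 * (q^2)^N" "(c*q^N)^2 * q^2 = (c*q^Suc N)^2" for c :: complex and N
    by (simp_all add: power_mult_distrib power_mult[symmetric] mult.commute)
  have "D (Suc N) = D N" for N
  proof -
    have A': "wp_admissible (a*q^N) (k*q^N) q z" by (rule wp_admissible.shift_power[OF A])
    have B': "wp_admissible (-(a*q^N)) (-(k*q^N)) q z" using wp_admissible.shift_power[OF B, of N] by simp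
    have C': "wp_admissible ((a*q^N)^2) ((k*q^N)^2) (q^2) (z^2)"
      using wp_admissible.shift_power[OF C, of N] by (simp add: squares)
    have lin: "(r1 - b1) + (r2 - b2) - 2 * (r3 - b3) = r1 + r2 - 2 * r3"
      if "b1 + b2 - 2 * b3 = 0" for r1 r2 r3 b1 b2 b3 :: complex
      using that by algebra
    have "D (Suc N) = wp_remainder (a*q^N*q) (k*q^N*q) q z + wp_remainder (-(a*q^N)*q) (-(k*q^N)*q) q z
      - 2 * wp_remainder ((a*q^N)^2*q^2) ((k*q^N)^2*q^2) (q^2) (z^2)"
      unfolding D_def squares(2) by (simp add: mult_ac)
    also have "\<dots> = D N"
      unfolding wp_admissible.remainder_shift[OF A'] wp_admissible.remainder_shift[OF B']
        wp_admissible.remainder_shift[OF C'] D_def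
      by (rule lin[OF boundary_combination[OF A' B']])
    finally show ?thesis .
  qed
  moreover have "D \<longlonglongrightarrow> 0 + 0 - 2 * 0"
    unfolding D_def
    using wp_admissible.remainder_shifted_tendsto_0[OF A] wp_admissible.remainder_shifted_tendsto_0[OF B]
      wp_admissible.remainder_shifted_tendsto_0[OF C]
    by (intro tendsto_intros) (simp_all add: squares)
  ultimately have "D 0 = 0 + 0 - 2 * 0" by (rule shift_invariant_limit)
  then show ?thesis by (simp add: D_def)
qed

definition wp_kernel :: "complex \<Rightarrow> complex \<Rightarrow> complex \<Rightarrow> nat \<Rightarrow> nat \<Rightarrow> complex" where
  "wp_kernel a k q n j =
     qpoch (k/a) q (n-j) * qpoch k q (n+j) / (qpoch q q (n-j) * qpoch (a*q) q (n+j))"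

lemma WP_Bailey_pair_Suc:
  assumes "WP_Bailey_pair \<alpha> \<beta> a k q"
  shows "\<beta> (Suc n) = wp_kernel a k q (Suc n) 0 + (\<Sum>i\<le>n. wp_kernel a k q (Suc n) (Suc i) * \<alpha> (Suc i))"
proof -
  have "\<beta> (Suc n) = (\<Sum>j=0..Suc n. wp_kernel a k q (Suc n) j * \<alpha> j)"
    using assms unfolding WP_Bailey_pair_def wp_kernel_def by blast
  also have "\<dots> = wp_kernel a k q (Suc n) 0 * \<alpha> 0 + (\<Sum>i=0..n. wp_kernel a k q (Suc n) (Suc i) * \<alpha> (Suc i))"
    by (subst sum.atLeast0_atMost_Suc_shift) simp
  finally show ?thesis using assms by (simp add: WP_Bailey_pair_def atLeast0AtMost)
qed

lemma bcoef_wp_kernel_0: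
  "bcoef a k q z n * wp_kernel a k q n 0 = vwp_term a k q z 0 (\<lambda>n. qpoch q q (n - 1)) n"
  unfolding bcoef_def wp_kernel_def vwp_term_def vwp_core_def by (simp add: divide_inverse mult_ac)

lemma bcoef_wp_kernel:
  assumes j: "1 \<le> j" and nz: "qpoch (q*a) q j \<noteq> 0" "qpoch (q*a/z) q j \<noteq> 0"
  shows "bcoef a k q z (m+j) * wp_kernel a k q (m+j) j = acoef a k q z j * vwp_term a k q z j (qpoch (q^j) q) m"
proof -
  have split: "qpoch z q (m+j) = qpoch z q j * qpoch (z*q^j) q m"
    using qpoch_add[of z q j m] by (simp add: add.commute)
  have "m + j - 1 = (j - 1) + m" "q * q^(j - 1) = q^j" using j by (simp_all add: power_eq_if)
  then have split': "qpoch q q (m+j-1) = qpoch q q (j - 1) * qpoch (q^j) q m"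
    using qpoch_add[of q q "j - 1" m] by simp
  have pw: "(q*a/z)^(m+j) = (q*a/z)^j * (q*a/z)^m" by (simp add: power_add mult.commute)
  have idx: "m + j - j = m" "m + j + j = m + 2*j" "j + m = m + j" by simp_all
  define X where "X = qpoch (q*a) q j * qpoch (q*a/z) q j"
  have "X \<noteq> 0" using nz by (simp add: X_def)
  moreover have "acoef a k q z j * vwp_term a k q z j (qpoch (q^j) q) m
      = bcoef a k q z (m+j) * wp_kernel a k q (m+j) j * (X * inverse X)"
    unfolding bcoef_def wp_kernel_def acoef_def vwp_term_def vwp_core_def split split' pw idx X_def
    by (simp add: divide_inverse mult_ac)
  ultimately show ?thesis by simp
qed

lemma (in wp_admissible) WP_Bailey_pair_sums:
  assumes wp: "WP_Bailey_pair \<alpha> \<beta> a k q"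
    and summable: "summable (\<lambda>n. norm (acoef a k q z (Suc n) * \<alpha> (Suc n)))"
  shows "(\<lambda>n. bcoef a k q z (Suc n) * \<beta> (Suc n))
           sums (wp_remainder a k q z + (\<Sum>n. acoef a k q z (Suc n) * \<alpha> (Suc n)))"
proof -
  define d where "d i = acoef a k q z (Suc i) * \<alpha> (Suc i)" for i
  define g where "g i = vwp_term a k q z (Suc i) (qpoch (q^Suc i) q)" for i
  define Pb where "Pb = exp (1 / (1 - norm q))"
  have Pb: "norm (qpoch (q^j) q m) \<le> Pb" for j m
    unfolding Pb_def using norm_q by (intro qpoch_norm_le) (simp_all add: norm_power power_le_one)
  have expand: "bcoef a k q z (Suc n) * \<beta> (Suc n)
      = vwp_term a k q z 0 (\<lambda>n. qpoch q q (n - 1)) (Suc n) + (\<Sum>i\<le>n. d i * g i (n - i))" for n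
  proof -
    have "bcoef a k q z (Suc n) * wp_kernel a k q (Suc n) (Suc i) = acoef a k q z (Suc i) * g i (n - i)"
      if "i \<le> n" for i
      using bcoef_wp_kernel[of "Suc i" q a z k "n - i"] that qpoch_nonzero(3,4) by (simp add: g_def)
    then show ?thesis
      unfolding WP_Bailey_pair_Suc[OF wp] bcoef_wp_kernel_0[symmetric]
      by (simp add: distrib_left sum_distrib_left d_def mult_ac)
  qed
  have Pb1: "norm (qpoch q q (m - 1)) \<le> Pb" for m using Pb[of 1] by simp
  have "(\<lambda>n. vwp_term a k q z 0 (\<lambda>n. qpoch q q (n - 1)) (Suc n)) sums wp_remainder a k q z"
    using summable_sums[OF summable_ignore_initial_segment[where k=1,
        OF vwp_term_summable[where j=0 and P="\<lambda>n. qpoch q q (n - 1)", OF Pb1]]]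
    by (simp add: wp_remainder_def)
  moreover have "(\<lambda>n. \<Sum>i\<le>n. d i * g i (n - i)) sums (\<Sum>i. d i)"
  proof -
    obtain C where C: "\<forall>j P m. norm (P m) \<le> Pb \<longrightarrow>
        norm (vwp_term a k q z j P m) \<le> C * norm (q*a/z)^m \<and> norm (vwp_cert a k q z j P m) \<le> C * norm (q*a/z)^m"
      using vwp_geometric_bound by blast
    show ?thesis
    proof (rule sums_kernel_convolution)
      show "summable (\<lambda>i. norm (d i))" using summable by (simp add: d_def)
      show "g i sums 1" for i unfolding g_def by (rule vwp_term_sums_1)
      show "norm (g i m) \<le> C * norm (q*a/z)^m" for i m unfolding g_def using C Pb by blast
      show "0 \<le> norm (q*a/z)" "norm (q*a/z) < 1" using norm_ratio_less_1 by simp_all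
    qed
  qed
  ultimately show ?thesis unfolding expand d_def by (rule sums_add)
qed

lemma wp_admissibleI:
  assumes "q \<noteq> 0" "norm q < 1" "a \<noteq> 0" "z \<noteq> 0" "k \<noteq> 1" "norm (q*a) < norm z"
    and "\<And>n. 1 \<le> n \<Longrightarrow> qpoch (q*k) q n \<noteq> 0 \<and> qpoch (q*k/z) q n \<noteq> 0 \<and>
      qpoch (q*a) q n \<noteq> 0 \<and> qpoch (q*a/z) q n \<noteq> 0"
  shows "wp_admissible a k q z"
proof
  fix n
  show "qpoch (q*k) q n \<noteq> 0" "qpoch (q*k/z) q n \<noteq> 0" "qpoch (q*a) q n \<noteq> 0" "qpoch (q*a/z) q n \<noteq> 0"
    using assms(7)[of n] by (cases n; simp)+
qed (use assms in auto)

theorem theorem1p2: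
  fixes \<alpha> \<beta> :: "complex \<Rightarrow> complex \<Rightarrow> complex \<Rightarrow> nat \<Rightarrow> complex"
    and a k q z :: complex
  assumes hq: "norm q < 1"
    and hz: "norm (q * a) < norm z"
    and wp1: "WP_Bailey_pair (\<alpha> a k q) (\<beta> a k q) a k q"
    and wp2: "WP_Bailey_pair (\<alpha> (-a) (-k) q) (\<beta> (-a) (-k) q) (-a) (-k) q"
    and wp3: "WP_Bailey_pair (\<alpha> (a^2) (k^2) (q^2)) (\<beta> (a^2) (k^2) (q^2)) (a^2) (k^2) (q^2)"
    and nz_z: "z \<noteq> 0" and nz_a: "a \<noteq> 0"
    and nz_k: "1 - k \<noteq> 0" "1 + k \<noteq> 0" "1 - k^2 \<noteq> 0"
    and nz_den: "\<And>n. n \<ge> 1 \<Longrightarrow>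
        qpoch (q*k) q n \<noteq> 0 \<and> qpoch (q*k/z) q n \<noteq> 0 \<and>
        qpoch (-q*k) q n \<noteq> 0 \<and> qpoch (-q*k/z) q n \<noteq> 0 \<and>
        qpoch (q^2*k^2) (q^2) n \<noteq> 0 \<and> qpoch (q^2*k^2/z^2) (q^2) n \<noteq> 0 \<and>
        qpoch (q*a) q n \<noteq> 0 \<and> qpoch (q*a/z) q n \<noteq> 0 \<and>
        qpoch (-q*a) q n \<noteq> 0 \<and> qpoch (-q*a/z) q n \<noteq> 0 \<and>
        qpoch (q^2*a^2) (q^2) n \<noteq> 0 \<and> qpoch (q^2*a^2/z^2) (q^2) n \<noteq> 0"
    and abs1: "summable (\<lambda>n. norm (bcoef a k q z (Suc n) * \<beta> a k q (Suc n)))"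
    and abs2: "summable (\<lambda>n. norm (bcoef (-a) (-k) q z (Suc n) * \<beta> (-a) (-k) q (Suc n)))"
    and abs3: "summable (\<lambda>n. norm (bcoef (a^2) (k^2) (q^2) (z^2) (Suc n) * \<beta> (a^2) (k^2) (q^2) (Suc n)))"
    and abs4: "summable (\<lambda>n. norm (acoef a k q z (Suc n) * \<alpha> a k q (Suc n)))"
    and abs5: "summable (\<lambda>n. norm (acoef (-a) (-k) q z (Suc n) * \<alpha> (-a) (-k) q (Suc n)))"
    and abs6: "summable (\<lambda>n. norm (acoef (a^2) (k^2) (q^2) (z^2) (Suc n) * \<alpha> (a^2) (k^2) (q^2) (Suc n)))"
  shows "(\<Sum>n. bcoef a k q z (Suc n) * \<beta> a k q (Suc n))
       + (\<Sum>n. bcoef (-a) (-k) q z (Suc n) * \<beta> (-a) (-k) q (Suc n))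
       - 2 * (\<Sum>n. bcoef (a^2) (k^2) (q^2) (z^2) (Suc n) * \<beta> (a^2) (k^2) (q^2) (Suc n))
     = (\<Sum>n. acoef a k q z (Suc n) * \<alpha> a k q (Suc n))
       + (\<Sum>n. acoef (-a) (-k) q z (Suc n) * \<alpha> (-a) (-k) q (Suc n))
       - 2 * (\<Sum>n. acoef (a^2) (k^2) (q^2) (z^2) (Suc n) * \<alpha> (a^2) (k^2) (q^2) (Suc n))"
proof (cases "q = 0")
  case True
  then show ?thesis by (simp add: bcoef_def acoef_def)
next
  case False
  have q2: "q^2 \<noteq> 0" "norm (q^2) < 1" using False hq by (simp_all add: norm_power power_less_one_iff)
  have "norm (q^2 * a^2) < norm (z^2)"
    using hz by (simp add: norm_mult norm_power power_mult_distrib[symmetric] power_strict_mono)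
  moreover have "-k \<noteq> 1" using nz_k(2) by (auto simp: minus_equation_iff)
  ultimately have adm: "wp_admissible a k q z" "wp_admissible (-a) (-k) q z"
      "wp_admissible (a^2) (k^2) (q^2) (z^2)"
    using q2 False hq hz nz_a nz_z nz_k nz_den by (auto intro!: wp_admissibleI)
  show ?thesis
    unfolding wp_admissible.WP_Bailey_pair_sums[OF adm(1) wp1 abs4, THEN sums_unique[symmetric]]
      wp_admissible.WP_Bailey_pair_sums[OF adm(2) wp2 abs5, THEN sums_unique[symmetric]]
      wp_admissible.WP_Bailey_pair_sums[OF adm(3) wp3 abs6, THEN sums_unique[symmetric]]
    using remainder_combination[OF adm] by (simp add: algebra_simps)
qed

end
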